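(* Let $(X,d),(Y,d)$ be metric spaces, $E,F$ strictly convex normed spaces over $\mathbb{K}$, and $T:\mathrm{Lip}(X,E)\to\mathrm{Lip}(Y,F)$ a surjective linear isometry. If $y_0\in\mathfrak{A}(T)$, then $d(y_0,\mathfrak{B}(T))=1$.
   Context: $\mathbb{K}=\mathbb{R}$ or $\mathbb{C}$. Strictly convex: $\|e_1+e_2\|<2$ whenever $e_1\ne e_2$ have norm $1$. $\mathrm{Lip}(X,E)$: bounded Lipschitz maps $X\to E$ with norm $\|f\|_L=\max\{\|f\|_\infty,L(f)\}$, $L(f)$ the Lipschitz number. For $e\in E$, $\tilde e$ is the constant function with value $e$. $\mathfrak{A}(T)=\{y\in Y: T\tilde e(y)=0\ \forall e\in E\}$ and $\mathfrak{B}(T)=Y\setminus\mathfrak{A}(T)$; $d(y_0,B)=\inf_{b\in B}d(y_0,b)$. *)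

theory Defs
  imports "HOL-Analysis.Analysis"
begin

definition strictly_convex_space :: "'e::real_normed_vector itself \<Rightarrow> bool" where
  "strictly_convex_space _ \<longleftrightarrow>
     (\<forall>e1 e2 :: 'e. norm e1 = 1 \<and> norm e2 = 1 \<and> e1 \<noteq> e2 \<longrightarrow> norm (e1 + e2) < 2)"

definition Lip :: "('x::metric_space \<Rightarrow> 'e::real_normed_vector) set" where
  "Lip = {f. bounded (range f) \<and> (\<exists>L. L-lipschitz_on UNIV f)}"

definition lip_number :: "('x::metric_space \<Rightarrow> 'e::real_normed_vector) \<Rightarrow> real" where
  "lip_number f = Sup ({0} \<union> {dist (f x) (f y) / dist x y | x y. x \<noteq> y})"

definition sup_norm :: "('x \<Rightarrow> 'e::real_normed_vector) \<Rightarrow> real" where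
  "sup_norm f = Sup (range (\<lambda>x. norm (f x)))"

definition lip_norm :: "('x::metric_space \<Rightarrow> 'e::real_normed_vector) \<Rightarrow> real" where
  "lip_norm f = max (sup_norm f) (lip_number f)"

definition frakA :: "(('x \<Rightarrow> 'e) \<Rightarrow> ('y \<Rightarrow> 'f::zero)) \<Rightarrow> 'y set" where
  "frakA T = {y. \<forall>e. T (\<lambda>_. e) y = 0}"

definition frakB :: "(('x \<Rightarrow> 'e) \<Rightarrow> ('y \<Rightarrow> 'f::zero)) \<Rightarrow> 'y set" where
  "frakB T = UNIV - frakA T"

end

theory Submission
  imports Defs
begin

(*
  Let y0 be in A(T) and y1 in B(T) with r = d(y0, y1) < 1. Take a unit vector v along
  T e~(y1) \<noteq> 0 and the preimage f of the tent of height 1 and slope 1/2 at y1 with value v.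
  Since T u~ vanishes at y0, it is at most r\<parallel>u\<parallel> at y1, and adding constants of norm 1/2 to f
  shows \<parallel>f\<parallel>\<^sub>\<infinity> \<le> (1 + r)/2. Hence f + s e still has norm at most 1 for a small s > 0, whereas
  T(f + s e)(y1) = (1 + s\<parallel>T e~(y1)\<parallel>) v has norm > 1.

  Conversely, if B(T) avoided a ball of radius R > 1 around y0, then T e~ (\<parallel>e\<parallel> = 1) would vanish
  there, so T e~ \<plusminus> h has norm at most 1 for a small tent h at y0. The preimage f of h then
  satisfies \<parallel>e \<plusminus> f(x)\<parallel> \<le> 1, which by strict convexity of E forces f = 0, hence h = 0.
*)

lemma Lip_norm_le_lip_norm:
  fixes f :: "'x::metric_space \<Rightarrow> 'e::real_normed_vector"
  assumes "f \<in> Lip"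
  shows "norm (f x) \<le> lip_norm f"
proof -
  from assms obtain B where "\<forall>z\<in>range f. norm z \<le> B"
    unfolding Lip_def bounded_iff by auto
  then have "bdd_above (range (\<lambda>x. norm (f x)))" by (auto intro!: bdd_aboveI)
  then have "norm (f x) \<le> sup_norm f" unfolding sup_norm_def by (rule cSup_upper[rotated]) simp
  then show ?thesis by (simp add: lip_norm_def)
qed

lemma Lip_dist_le_lip_norm:
  fixes f :: "'x::metric_space \<Rightarrow> 'e::real_normed_vector"
  assumes "f \<in> Lip"
  shows "dist (f x) (f y) \<le> lip_norm f * dist x y"
proof -
  from assms obtain L where L: "L-lipschitz_on UNIV f" unfolding Lip_def by auto
  let ?Q = "{0} \<union> {dist (f x) (f y) / dist x y | x y. x \<noteq> y}"
  have "q \<le> L" if "q \<in> ?Q" for q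
    using that lipschitz_on_nonneg[OF L] lipschitz_onD[OF L UNIV_I UNIV_I]
    by (auto simp: pos_divide_le_eq)
  then have "bdd_above ?Q" by (auto intro!: bdd_aboveI)
  then have Q_le: "q \<le> lip_number f" if "q \<in> ?Q" for q
    unfolding lip_number_def using that by (rule cSup_upper[rotated])
  have "dist (f x) (f y) \<le> lip_number f * dist x y"
  proof (cases "x = y")
    case False
    then have "dist (f x) (f y) / dist x y \<le> lip_number f" by (intro Q_le) auto
    with False show ?thesis by (simp add: pos_divide_le_eq)
  qed simp
  also have "\<dots> \<le> lip_norm f * dist x y" by (intro mult_right_mono) (auto simp: lip_norm_def)
  finally show ?thesis .
qed

lemma lip_norm_nonneg: "f \<in> Lip \<Longrightarrow> 0 \<le> lip_norm f"
  using Lip_norm_le_lip_norm norm_ge_zero order_trans by blast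

lemma Lip_lip_norm_leI:
  fixes f :: "'x::metric_space \<Rightarrow> 'e::real_normed_vector"
  assumes M: "0 \<le> M" and norm_le: "\<And>x. norm (f x) \<le> M"
    and dist_le: "\<And>x y. dist (f x) (f y) \<le> M * dist x y"
  shows "f \<in> Lip" "lip_norm f \<le> M"
proof -
  show "f \<in> Lip" unfolding Lip_def bounded_iff
    using norm_le dist_le M by (auto intro!: lipschitz_onI)
  have "sup_norm f \<le> M" unfolding sup_norm_def by (rule cSup_least) (use norm_le in auto)
  moreover have "lip_number f \<le> M" unfolding lip_number_def
    by (rule cSup_least) (use M dist_le in \<open>auto simp: pos_divide_le_eq\<close>)
  ultimately show "lip_norm f \<le> M" by (simp add: lip_norm_def)
qed

lemma lip_norm_const: "lip_norm ((\<lambda>_. c) :: 'x::metric_space \<Rightarrow> 'e::real_normed_vector) = norm c"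
proof -
  have "lip_number ((\<lambda>_. c) :: 'x \<Rightarrow> 'e) = Sup {0}"
    unfolding lip_number_def by (rule arg_cong[where f=Sup]) auto
  then show ?thesis by (simp add: lip_norm_def sup_norm_def)
qed

lemma Lip_const: "(\<lambda>_. c) \<in> (Lip :: ('x::metric_space \<Rightarrow> 'e::real_normed_vector) set)"
  by (rule Lip_lip_norm_leI(1)[where M="norm c"]) auto

lemma Lip_add:
  fixes f g :: "'x::metric_space \<Rightarrow> 'e::real_normed_vector"
  assumes f: "f \<in> Lip" and g: "g \<in> Lip"
  shows "(\<lambda>x. f x + g x) \<in> Lip"
proof (rule Lip_lip_norm_leI(1)[where M="lip_norm f + lip_norm g"])
  show "0 \<le> lip_norm f + lip_norm g" using f g by (simp add: lip_norm_nonneg)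
  fix x y
  show "norm (f x + g x) \<le> lip_norm f + lip_norm g"
    using Lip_norm_le_lip_norm[OF f, of x] Lip_norm_le_lip_norm[OF g, of x]
      norm_triangle_ineq[of "f x" "g x"] by linarith
  have "dist (f x + g x) (f y + g y) \<le> dist (f x) (f y) + dist (g x) (g y)"
    by (rule dist_triangle_add)
  also have "\<dots> \<le> (lip_norm f + lip_norm g) * dist x y"
    using Lip_dist_le_lip_norm[OF f, of x y] Lip_dist_le_lip_norm[OF g, of x y]
    by (simp add: distrib_right)
  finally show "dist (f x + g x) (f y + g y) \<le> (lip_norm f + lip_norm g) * dist x y" .
qed

lemma Lip_scaleR:
  fixes f :: "'x::metric_space \<Rightarrow> 'e::real_normed_vector"
  assumes f: "f \<in> Lip"
  shows "(\<lambda>x. c *\<^sub>R f x) \<in> Lip"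
proof (rule Lip_lip_norm_leI(1)[where M="\<bar>c\<bar> * lip_norm f"])
  show "0 \<le> \<bar>c\<bar> * lip_norm f" using f by (simp add: lip_norm_nonneg)
  fix x y
  show "norm (c *\<^sub>R f x) \<le> \<bar>c\<bar> * lip_norm f"
    using Lip_norm_le_lip_norm[OF f, of x] by (simp add: mult_left_mono)
  have "dist (c *\<^sub>R f x) (c *\<^sub>R f y) = \<bar>c\<bar> * dist (f x) (f y)"
    by (simp add: dist_norm scaleR_right_diff_distrib[symmetric])
  also have "\<dots> \<le> \<bar>c\<bar> * lip_norm f * dist x y"
    using Lip_dist_le_lip_norm[OF f, of x y] by (simp add: mult_left_mono mult.assoc)
  finally show "dist (c *\<^sub>R f x) (c *\<^sub>R f y) \<le> \<bar>c\<bar> * lip_norm f * dist x y" .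
qed

lemma Lip_add_const_lip_norm_le:
  fixes f :: "'x::metric_space \<Rightarrow> 'e::real_normed_vector"
  assumes f: "f \<in> Lip" "lip_norm f \<le> M" and norm_le: "\<And>x. norm (f x) + norm c \<le> M"
  shows "(\<lambda>x. f x + c) \<in> Lip" "lip_norm (\<lambda>x. f x + c) \<le> M"
proof -
  have "0 \<le> M" using lip_norm_nonneg[OF f(1)] f(2) by linarith
  moreover have "norm (f x + c) \<le> M" for x using norm_triangle_ineq[of "f x" c] norm_le[of x] by linarith
  moreover have "dist (f x + c) (f y + c) \<le> M * dist x y" for x y
    using Lip_dist_le_lip_norm[OF f(1), of x y] mult_right_mono[OF f(2) zero_le_dist, of x y] by simp
  ultimately show "(\<lambda>x. f x + c) \<in> Lip" "lip_norm (\<lambda>x. f x + c) \<le> M" by (rule Lip_lip_norm_leI)+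
qed

definition tent :: "'y::metric_space \<Rightarrow> real \<Rightarrow> real \<Rightarrow> 'f::real_normed_vector \<Rightarrow> 'y \<Rightarrow> 'f" where
  "tent p c t v y = max 0 (c - t * dist y p) *\<^sub>R v"

lemma norm_tent: "norm v = 1 \<Longrightarrow> norm (tent p c t v y) = max 0 (c - t * dist y p)"
  by (simp add: tent_def)

lemma dist_tent_le:
  assumes "0 \<le> t" "norm v = 1"
  shows "dist (tent p c t v y) (tent p c t v y') \<le> t * dist y y'"
proof -
  have max_diff: "\<bar>max 0 (c - a) - max 0 (c - b)\<bar> \<le> \<bar>a - b\<bar>" for a b :: real
    by (simp add: max_def abs_if)
  have "dist (tent p c t v y) (tent p c t v y') = \<bar>max 0 (c - t * dist y p) - max 0 (c - t * dist y' p)\<bar>"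
    using assms(2) by (simp add: tent_def dist_norm scaleR_left_diff_distrib[symmetric])
  also have "\<dots> \<le> \<bar>t * dist y p - t * dist p y'\<bar>" by (metis max_diff dist_commute)
  also have "\<dots> = t * \<bar>dist y p - dist p y'\<bar>"
    using assms(1) by (simp add: abs_mult right_diff_distrib[symmetric])
  also have "\<dots> \<le> t * dist y y'" by (intro mult_left_mono abs_dist_diff_le assms(1))
  finally show ?thesis .
qed

lemma tent_Lip:
  assumes "0 \<le> c" "0 \<le> t" "norm v = 1"
  shows "tent p c t v \<in> Lip" "lip_norm (tent p c t v) \<le> max c t"
proof -
  have norm_le: "norm (tent p c t v y) \<le> max c t" for y
  proof -
    have "0 \<le> t * dist y p" using assms(2) by simp
    then show ?thesis unfolding norm_tent[OF assms(3)] using assms(1) by linarith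
  qed
  have dist_le: "dist (tent p c t v y) (tent p c t v y') \<le> max c t * dist y y'" for y y'
    using dist_tent_le[OF assms(2,3)] mult_right_mono[OF max.cobounded2 zero_le_dist]
    by (rule order_trans)
  have "0 \<le> max c t" using assms(1) by simp
  from Lip_lip_norm_leI[OF this norm_le dist_le]
  show "tent p c t v \<in> Lip" "lip_norm (tent p c t v) \<le> max c t" .
qed

lemma lip_norm_tent_add_le:
  fixes G :: "'y::metric_space \<Rightarrow> 'f::real_normed_vector"
  assumes G: "G \<in> Lip" "lip_norm G \<le> 1/2" and Gp: "norm (G p) \<le> r/2"
    and r: "0 \<le> r" and v: "norm v = 1"
  shows "lip_norm (\<lambda>y. tent p 1 (1/2) v y + G y) \<le> 1 + r/2"
proof (rule Lip_lip_norm_leI(2))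
  show "0 \<le> 1 + r/2" using r by simp
  fix y y'
  have "norm (G y) \<le> norm (G p) + dist (G y) (G p)" by (metis dist_norm norm_triangle_sub)
  also have "\<dots> \<le> r/2 + dist y p / 2"
    using Gp Lip_dist_le_lip_norm[OF G(1), of y p] G(2) mult_right_mono[OF G(2) zero_le_dist, of y p]
    by linarith
  finally have G_near: "norm (G y) \<le> r/2 + dist y p / 2" .
  have G_far: "norm (G y) \<le> 1/2" using Lip_norm_le_lip_norm[OF G(1), of y] G(2) by linarith
  have "norm (tent p 1 (1/2) v y) + norm (G y) \<le> 1 + r/2"
  proof (cases "dist y p \<le> 2")
    case True
    then show ?thesis using norm_tent[OF v, of p 1 "1/2" y] G_near by simp
  next
    case False
    then show ?thesis using norm_tent[OF v, of p 1 "1/2" y] G_far r by simp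
  qed
  then show "norm (tent p 1 (1/2) v y + G y) \<le> 1 + r/2"
    using norm_triangle_ineq[of "tent p 1 (1/2) v y" "G y"] by linarith
  have "dist (tent p 1 (1/2) v y + G y) (tent p 1 (1/2) v y' + G y')
      \<le> dist (tent p 1 (1/2) v y) (tent p 1 (1/2) v y') + dist (G y) (G y')"
    by (rule dist_triangle_add)
  also have "\<dots> \<le> 1/2 * dist y y' + 1/2 * dist y y'"
    using dist_tent_le[OF _ v, of "1/2" p 1 y y'] Lip_dist_le_lip_norm[OF G(1), of y y']
      mult_right_mono[OF G(2) zero_le_dist, of y y'] by linarith
  also have "\<dots> \<le> (1 + r/2) * dist y y'" using r by (simp add: algebra_simps)
  finally show "dist (tent p 1 (1/2) v y + G y) (tent p 1 (1/2) v y' + G y') \<le> (1 + r/2) * dist y y'" .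
qed

lemma lip_norm_add_tent_le_1:
  fixes g :: "'y::metric_space \<Rightarrow> 'f::real_normed_vector"
  assumes g: "g \<in> Lip" "lip_norm g \<le> 1" and g_zero: "\<And>y. dist y p < R \<Longrightarrow> g y = 0"
    and \<rho>: "0 < \<rho>" "\<rho> \<le> 1" "2 * \<rho> + 1 \<le> R" and v: "norm v = 1"
  shows "lip_norm (\<lambda>y. g y + tent p \<rho> 1 v y) \<le> 1"
proof (rule Lip_lip_norm_leI(2))
  let ?h = "tent p \<rho> 1 v"
  have h_zero: "?h y = 0" if "\<rho> \<le> dist y p" for y using that by (simp add: tent_def)
  have h_norm: "norm (?h y) \<le> \<rho>" for y using \<rho>(1) by (simp add: norm_tent[OF v])
  have g_norm: "norm (g y) \<le> 1" for y using Lip_norm_le_lip_norm[OF g(1), of y] g(2) by linarith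
  have g_dist: "dist (g y) (g y') \<le> dist y y'" for y y'
    using Lip_dist_le_lip_norm[OF g(1), of y y'] mult_right_mono[OF g(2) zero_le_dist, of y y'] by simp
  show "(0::real) \<le> 1" by simp
  fix y y'
  show "norm (g y + ?h y) \<le> 1"
    using g_zero[of y] h_zero[of y] h_norm[of y] g_norm[of y] \<rho> by (cases "dist y p < \<rho>") auto
  have across: "dist (g q + ?h q) (g q' + ?h q') \<le> dist q q'"
    if "dist q p < \<rho>" "R \<le> dist q' p" for q q'
  proof -
    have "dist (g q + ?h q) (g q' + ?h q') = norm (?h q - g q')"
      using g_zero[of q] h_zero[of q'] that \<rho> by (simp add: dist_norm)
    also have "\<dots> \<le> \<rho> + 1" using norm_triangle_ineq4[of "?h q" "g q'"] h_norm[of q] g_norm[of q'] by linarith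
    also have "\<dots> \<le> dist q q'" using that \<rho> dist_triangle[of q' p q] by (simp add: dist_commute)
    finally show ?thesis .
  qed
  have "dist (g y + ?h y) (g y' + ?h y') \<le> dist y y'"
  proof (cases "dist y p < R \<and> dist y' p < R")
    case True
    then show ?thesis using g_zero dist_tent_le[OF _ v, of 1 p \<rho> y y'] by simp
  next
    case outside: False
    show ?thesis
    proof (cases "\<rho> \<le> dist y p \<and> \<rho> \<le> dist y' p")
      case True
      then show ?thesis using h_zero g_dist by simp
    next
      case False
      with outside \<rho> consider "dist y p < \<rho>" "R \<le> dist y' p" | "dist y' p < \<rho>" "R \<le> dist y p"
        by fastforce
      then show ?thesis
      proof cases
        case 1
        then show ?thesis by (rule across)
      next
        case 2
        then show ?thesis using across[of y' y] by (simp add: dist_commute)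
      qed
    qed
  qed
  then show "dist (g y + ?h y) (g y' + ?h y') \<le> 1 * dist y y'" by simp
qed

lemma strictly_convex_pm_le_1_imp_0:
  fixes e a :: "'e::real_normed_vector"
  assumes sc: "strictly_convex_space TYPE('e)" and e: "norm e = 1"
    and plus: "norm (e + a) \<le> 1" and minus: "norm (e - a) \<le> 1"
  shows "a = 0"
proof (rule ccontr)
  assume "a \<noteq> 0"
  have sum: "norm ((e + a) + (e - a)) = 2" using e by (simp add: scaleR_2[symmetric])
  then have "norm (e + a) = 1" "norm (e - a) = 1"
    using plus minus norm_triangle_ineq[of "e + a" "e - a"] by linarith+
  moreover have "e + a \<noteq> e - a"
  proof
    assume "e + a = e - a"
    then have "2 *\<^sub>R a = 0" by (simp add: scaleR_2 algebra_simps)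
    with \<open>a \<noteq> 0\<close> show False by simp
  qed
  ultimately have "norm ((e + a) + (e - a)) < 2" using sc unfolding strictly_convex_space_def by blast
  with sum show False by simp
qed

lemma scaleR_norm_sgn: "norm x *\<^sub>R sgn x = (x::'a::real_normed_vector)"
  by (cases "x = 0") (simp_all add: sgn_div_norm)

locale Lip_isometry =
  fixes T :: "('x::metric_space \<Rightarrow> 'e::real_normed_vector) \<Rightarrow> ('y::metric_space \<Rightarrow> 'f::real_normed_vector)"
  assumes T_Lip: "\<And>f. f \<in> Lip \<Longrightarrow> T f \<in> Lip"
    and T_surj: "T ` Lip = Lip"
    and T_add: "\<And>f g. f \<in> Lip \<Longrightarrow> g \<in> Lip \<Longrightarrow> T (\<lambda>x. f x + g x) = (\<lambda>y. T f y + T g y)"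
    and T_scaleR: "\<And>c f. f \<in> Lip \<Longrightarrow> T (\<lambda>x. c *\<^sub>R f x) = (\<lambda>y. c *\<^sub>R T f y)"
    and lip_norm_T: "\<And>f. f \<in> Lip \<Longrightarrow> lip_norm (T f) = lip_norm f"
begin

lemma T_const_Lip: "T (\<lambda>_. c) \<in> Lip"
  by (rule T_Lip[OF Lip_const])

lemma lip_norm_T_const: "lip_norm (T (\<lambda>_. c)) = norm c"
  by (simp add: lip_norm_T[OF Lip_const] lip_norm_const)

lemma T_zero: "T (\<lambda>_. 0) = (\<lambda>_. 0)"
  using T_scaleR[OF Lip_const[of "0::'e"], of 0] by simp

lemma T_preimage:
  assumes "k \<in> Lip"
  obtains f where "f \<in> Lip" "T f = k"
  using assms T_surj by (metis imageE)

lemma norm_T_const_le: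
  assumes "y0 \<in> frakA T"
  shows "norm (T (\<lambda>_. u) y) \<le> norm u * dist y y0"
  using Lip_dist_le_lip_norm[OF T_const_Lip, of u y y0] assms
  by (simp add: frakA_def lip_norm_T_const dist_norm)

(* Shifting f by a constant of norm 1/2 pointing along f x adds exactly 1/2 to \<parallel>f x\<parallel>,
   but adds to the tent only T u~, which is at most r/2 at its peak y1. *)
lemma norm_preimage_tent_le:
  assumes y0: "y0 \<in> frakA T" and v: "norm v = 1"
    and f: "f \<in> Lip" "T f = tent y1 1 (1/2) v"
  shows "norm (f x) \<le> (1 + dist y0 y1) / 2"
proof (cases "f x = 0")
  case False
  define r where "r = dist y0 y1"
  define u where "u = (1/2) *\<^sub>R sgn (f x)"
  have u: "norm u = 1/2" using False by (simp add: u_def norm_sgn)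
  have "f x + u = (norm (f x) + 1/2) *\<^sub>R sgn (f x)"
    by (simp add: u_def scaleR_add_left scaleR_norm_sgn)
  then have "norm (f x) + 1/2 = norm (f x + u)" using False by (simp add: norm_sgn)
  also have "\<dots> \<le> lip_norm (\<lambda>x. f x + u)" by (rule Lip_norm_le_lip_norm[OF Lip_add[OF f(1) Lip_const]])
  also have "\<dots> = lip_norm (T (\<lambda>x. f x + u))" by (rule lip_norm_T[OF Lip_add[OF f(1) Lip_const], symmetric])
  also have "\<dots> = lip_norm (\<lambda>y. tent y1 1 (1/2) v y + T (\<lambda>_. u) y)"
    using T_add[OF f(1) Lip_const, of u] f(2) by simp
  also have "\<dots> \<le> 1 + r/2"
  proof (rule lip_norm_tent_add_le[OF T_const_Lip _ _ _ v])
    show "lip_norm (T (\<lambda>_. u)) \<le> 1/2" by (simp add: lip_norm_T_const u)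
    show "norm (T (\<lambda>_. u) y1) \<le> r/2"
      using norm_T_const_le[OF y0, of u y1] by (simp add: u r_def dist_commute)
    show "0 \<le> r" by (simp add: r_def)
  qed
  finally show ?thesis by (simp add: r_def)
qed simp

lemma dist_frakA_frakB_ge_1:
  assumes y0: "y0 \<in> frakA T" and y1: "y1 \<in> frakB T"
  shows "1 \<le> dist y0 y1"
proof (rule ccontr)
  define r where "r = dist y0 y1"
  assume "\<not> 1 \<le> dist y0 y1"
  then have r: "0 \<le> r" "r < 1" by (auto simp: r_def)
  obtain e where w: "T (\<lambda>_. e) y1 \<noteq> 0" using y1 by (auto simp: frakB_def frakA_def)
  define w where "w = T (\<lambda>_. e) y1"
  define v where "v = sgn w"
  have v: "norm v = 1" using w by (simp add: v_def w_def norm_sgn)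
  obtain f where f: "f \<in> Lip" "T f = tent y1 1 (1/2) v"
    using T_preimage[OF tent_Lip(1)[of 1 "1/2" v y1]] v by auto
  have lip_f: "lip_norm f \<le> 1"
    using lip_norm_T[OF f(1)] f(2) tent_Lip(2)[of 1 "1/2" v y1] v by simp
  have f_small: "norm (f x) \<le> (1 + r) / 2" for x
    using norm_preimage_tent_le[OF y0 v f] by (simp add: r_def)
  have "e \<noteq> 0" using w T_zero by auto
  define s where "s = (1 - r) / (4 * norm e)"
  have s: "0 < s" "s * norm e = (1 - r) / 4" using \<open>e \<noteq> 0\<close> r by (simp_all add: s_def)
  define H where "H = (\<lambda>x. f x + s *\<^sub>R e)"
  have "norm (f x) + norm (s *\<^sub>R e) \<le> 1" for x
  proof -
    have "norm (f x) + norm (s *\<^sub>R e) = norm (f x) + (1 - r) / 4" using s by simp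
    also have "\<dots> \<le> (1 + r) / 2 + (1 - r) / 4" using f_small[of x] by simp
    also have "\<dots> \<le> 1" using r by (simp add: field_simps)
    finally show ?thesis .
  qed
  from Lip_add_const_lip_norm_le[OF f(1) lip_f this]
  have H: "H \<in> Lip" "lip_norm H \<le> 1" unfolding H_def .
  have "T H y1 = v + s *\<^sub>R w"
    using T_add[OF f(1) Lip_const, of "s *\<^sub>R e"] T_scaleR[OF Lip_const, of s e] f(2)
    by (simp add: H_def tent_def w_def)
  also have "\<dots> = (1 + s * norm w) *\<^sub>R v"
    by (simp add: v_def scaleR_add_left scaleR_norm_sgn flip: scaleR_scaleR)
  finally have "1 + s * norm w \<le> lip_norm (T H)"
    using Lip_norm_le_lip_norm[OF T_Lip[OF H(1)], of y1] v s(1) by simp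
  moreover have "0 < s * norm w" using s(1) w by (simp add: w_def)
  ultimately show False using H lip_norm_T[OF H(1)] by linarith
qed

lemma frakB_near_frakA:
  assumes sc: "strictly_convex_space TYPE('e)" and nontriv: "\<exists>e::'e. e \<noteq> 0"
    and y0: "y0 \<in> frakA T" and R: "1 < R"
  shows "\<exists>y\<in>frakB T. dist y0 y < R"
proof (rule ccontr)
  assume "\<not> (\<exists>y\<in>frakB T. dist y0 y < R)"
  then have T_const_zero: "T (\<lambda>_. c) y = 0" if "dist y y0 < R" for c y
    using that by (auto simp: frakB_def frakA_def dist_commute)
  obtain e :: 'e where e: "norm e = 1" using nontriv by (metis norm_sgn)
  define g where "g = T (\<lambda>_. e)"
  have g_zero: "g y = 0" if "dist y y0 < R" for y using T_const_zero[OF that] by (simp add: g_def)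
  have g: "g \<in> Lip" "lip_norm g = 1" using T_const_Lip lip_norm_T_const e by (simp_all add: g_def)
  then have "g \<noteq> (\<lambda>_. 0)" by (auto simp: lip_norm_const)
  then obtain y1 where "g y1 \<noteq> 0" by auto
  define v where "v = sgn (g y1)"
  have v: "norm v = 1" using \<open>g y1 \<noteq> 0\<close> by (simp add: v_def norm_sgn)
  define \<rho> where "\<rho> = min 1 ((R - 1) / 2)"
  have \<rho>: "0 < \<rho>" "\<rho> \<le> 1" "2 * \<rho> + 1 \<le> R" using R by (auto simp: \<rho>_def min_def field_simps)
  define h where "h = tent y0 \<rho> 1 v"
  obtain f where f: "f \<in> Lip" "T f = h"
    using T_preimage[OF tent_Lip(1)[of \<rho> 1 v y0]] \<rho>(1) v by (auto simp: h_def)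
  have norm_e_pm_f: "norm (e + c *\<^sub>R f x) \<le> 1" if c: "c = 1 \<or> c = -1" for c x
  proof -
    have Lip_e_f: "(\<lambda>x. e + c *\<^sub>R f x) \<in> Lip" by (rule Lip_add[OF Lip_const Lip_scaleR[OF f(1)]])
    have "T (\<lambda>x. e + c *\<^sub>R f x) = (\<lambda>y. g y + tent y0 \<rho> 1 (c *\<^sub>R v) y)"
      using T_add[OF Lip_const Lip_scaleR[OF f(1)], of e c] T_scaleR[OF f(1), of c] f(2)
      by (simp add: g_def h_def tent_def mult.commute)
    moreover have "lip_norm (\<lambda>y. g y + tent y0 \<rho> 1 (c *\<^sub>R v) y) \<le> 1"
      using c by (intro lip_norm_add_tent_le_1[OF g(1) _ _ \<rho>]) (auto simp: g(2) g_zero v)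
    ultimately have "lip_norm (\<lambda>x. e + c *\<^sub>R f x) \<le> 1" using lip_norm_T[OF Lip_e_f] by simp
    then show ?thesis using Lip_norm_le_lip_norm[OF Lip_e_f, of x] by simp
  qed
  have "f = (\<lambda>_. 0)"
    using strictly_convex_pm_le_1_imp_0[OF sc e] norm_e_pm_f[of 1] norm_e_pm_f[of "-1"] by fastforce
  then have "h y0 = 0" using f(2) T_zero by (metis)
  then show False using \<rho>(1) v by (simp add: h_def tent_def)
qed

end

theorem proposition5p2:
  fixes T :: "('x::metric_space \<Rightarrow> 'e::real_normed_vector) \<Rightarrow> ('y::metric_space \<Rightarrow> 'f::real_normed_vector)"
    and y0 :: 'y
  assumes E_sc: "strictly_convex_space TYPE('e)"
    and F_sc: "strictly_convex_space TYPE('f)"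
    and E_nontriv: "\<exists>e::'e. e \<noteq> 0"
    and T_maps: "\<And>f. f \<in> Lip \<Longrightarrow> T f \<in> Lip"
    and T_surj: "T ` Lip = Lip"
    and T_add: "\<And>f g. f \<in> Lip \<Longrightarrow> g \<in> Lip \<Longrightarrow> T (\<lambda>x. f x + g x) = (\<lambda>y. T f y + T g y)"
    and T_scale: "\<And>c f. f \<in> Lip \<Longrightarrow> T (\<lambda>x. c *\<^sub>R f x) = (\<lambda>y. c *\<^sub>R T f y)"
    and T_isom: "\<And>f. f \<in> Lip \<Longrightarrow> lip_norm (T f) = lip_norm f"
    and y0A: "y0 \<in> frakA T"
  shows "infdist y0 (frakB T) = 1"
proof -
  interpret Lip_isometry T
    using T_maps T_surj T_add T_scale T_isom by unfold_locales
  have near: "\<exists>y\<in>frakB T. dist y0 y < R" if "1 < R" for R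
    using frakB_near_frakA[OF E_sc E_nontriv y0A that] .
  have "frakB T \<noteq> {}" using near[of 2] by auto
  then have "1 \<le> infdist y0 (frakB T)"
    unfolding infdist_def using dist_frakA_frakB_ge_1[OF y0A] by (auto intro!: cINF_greatest)
  moreover have "\<not> 1 < infdist y0 (frakB T)"
    using near[of "infdist y0 (frakB T)"] infdist_le[of _ "frakB T" y0] by fastforce
  ultimately show ?thesis by simp
qed

end
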